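(* Let $q=2^r$ with $r\ge1$. Let $k\ne1$ be an element of $(\mathbb{Z}/q\mathbb{Z})^\times$ and let $\theta_k$ denote multiplication by $k$ on $(\mathbb{Z}/q\mathbb{Z})^\times$. Let $f:(\mathbb{Z}/2^r\mathbb{Z})^\times\to\mathbb{R}$ be a function that is monotonic on $[1,2^r]_\mathbb{Z}$. If $f\circ\theta_k=f$, then $f$ is constant on $[1,2^{r-1}]_\mathbb{Z}$.
   Context: $[a,b]_\mathbb{Z}$ denotes the set of odd integers in the closed interval $[a,b]$; $[1,2^r]_\mathbb{Z}$ is used as the set of representatives of $(\mathbb{Z}/2^r\mathbb{Z})^\times$, and "monotonic on $[1,2^r]_\mathbb{Z}$" means $i\mapsto f(i\bmod 2^r)$ is monotonic on this set of integers. *)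

theory Defs
  imports Complex_Main "HOL-Number_Theory.Cong"
begin

definition odd_Icc :: "int \<Rightarrow> int \<Rightarrow> int set" where
  "odd_Icc a b = {i. odd i \<and> a \<le> i \<and> i \<le> b}"

end

theory Submission
  imports Defs
begin

text \<open>Some power \<open>y\<close> of \<open>k\<close> is a nontrivial square root of unity modulo \<open>2^r\<close>, so
  \<open>y \<equiv> \<plusminus>1 (mod 2^(r-1))\<close> while \<open>y \<noteq> 1\<close> modulo \<open>2^r\<close>; hence its representative in
  \<open>[1, 2^r]\<close> is at least \<open>2^(r-1) - 1\<close>. Invariance under multiplication by \<open>k\<close> gives
  \<open>f y = f 1\<close>, and monotonicity forces \<open>f\<close> to be constant on the odd numbers in between.\<close>

lemma odd_power_two_power_cong:
  fixes k :: int
  assumes "odd k"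
  shows "[k ^ 2 ^ n = 1] (mod 2 ^ Suc n)"
proof (induction n)
  case 0
  then show ?case using assms by (simp add: cong_iff_dvd_diff)
next
  case (Suc n)
  then obtain t where t: "k ^ 2 ^ n = 2 ^ Suc n * t + 1"
    unfolding cong_iff_dvd_diff dvd_def by (auto simp: diff_eq_eq)
  have "k ^ 2 ^ Suc n = (k ^ 2 ^ n)\<^sup>2"
    by (simp add: power_mult[symmetric] mult.commute)
  also have "\<dots> = 2 ^ Suc (Suc n) * (t + 2 ^ n * t\<^sup>2) + 1"
    unfolding t by (simp add: power2_eq_square algebra_simps)
  finally show ?case by (simp add: cong_iff_dvd_diff)
qed

lemma nontrivial_square_root_of_unity_among_powers:
  fixes k q :: int
  assumes "[k ^ 2 ^ j = 1] (mod q)" and "\<not> [k = 1] (mod q)"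
  obtains n where "[(k ^ n)\<^sup>2 = 1] (mod q)" and "\<not> [k ^ n = 1] (mod q)"
  using assms(1)
proof (induction j)
  case 0
  then show ?case using assms(2) by simp
next
  case (Suc j)
  show ?case
  proof (cases "[k ^ 2 ^ j = 1] (mod q)")
    case True
    then show ?thesis using Suc.IH Suc.prems(1) by blast
  next
    case False
    have "(k ^ 2 ^ j)\<^sup>2 = k ^ 2 ^ Suc j"
      by (simp add: power_mult[symmetric] mult.commute)
    then show ?thesis using Suc.prems False by metis
  qed
qed

lemma square_root_of_unity_mod_two_power:
  fixes y :: int
  assumes "odd y" and "[y\<^sup>2 = 1] (mod 2 ^ Suc m)"
  shows "[y = 1] (mod 2 ^ m) \<or> [y = -1] (mod 2 ^ m)"
proof -
  obtain a where a: "y = 2 * a + 1" using assms(1) oddE by blast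
  have "2 * 2 ^ m dvd 2 * (2 * (a * (a + 1)))"
    using assms(2) by (simp add: cong_iff_dvd_diff a power2_eq_square algebra_simps)
  then have "2 ^ m dvd 2 * (a * (a + 1))" by (metis dvd_times_left_cancel_iff zero_neq_numeral)
  then have dvd: "2 ^ m dvd (2 * a) * (a + 1)" "2 ^ m dvd a * (2 * (a + 1))"
    by (simp_all only: mult.assoc mult.left_commute)
  show ?thesis
  proof (cases "even a")
    case True
    then have "coprime (2 ^ m) (a + 1)" by simp
    then have "2 ^ m dvd y - 1" using dvd(1) a by (simp add: coprime_dvd_mult_left_iff)
    then show ?thesis by (simp add: cong_iff_dvd_diff)
  next
    case False
    then have "coprime (2 ^ m) a" by simp
    then have "2 ^ m dvd y + 1" using dvd(2) a by (simp add: coprime_dvd_mult_right_iff ac_simps)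
    then show ?thesis by (simp add: cong_iff_dvd_diff)
  qed
qed

lemma nontrivial_square_root_of_unity_mod_two_power_ge:
  fixes y :: int
  assumes "odd y" and "[y\<^sup>2 = 1] (mod 2 ^ Suc m)" and "\<not> [y = 1] (mod 2 ^ Suc m)"
  shows "2 ^ m - 1 \<le> y mod 2 ^ Suc m"
proof -
  define y' where "y' = y mod 2 ^ Suc m"
  have "odd y'" using assms(1) by (simp add: y'_def odd_iff_mod_2_eq_one mod_mod_cancel)
  moreover have "y' \<ge> 0" by (simp add: y'_def)
  ultimately have "y' \<ge> 1" by (cases "y' = 0") auto
  moreover have "y' \<noteq> 1" using assms(3) unfolding y'_def cong_def by (metis mod_mod_trivial)
  moreover have "[y' = 1] (mod 2 ^ m) \<or> [y' = -1] (mod 2 ^ m)"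
    using square_root_of_unity_mod_two_power[OF assms(1,2)]
    by (simp add: y'_def cong_def mod_mod_cancel)
  ultimately have "2 ^ m dvd y' - 1 \<and> 0 < y' - 1 \<or> 2 ^ m dvd y' + 1 \<and> 0 < y' + 1"
    by (auto simp: cong_iff_dvd_diff)
  then have "2 ^ m \<le> y' - 1 \<or> 2 ^ m \<le> y' + 1" using zdvd_imp_le by blast
  then show ?thesis unfolding y'_def by linarith
qed

lemma odd_power_mod_two_power_ge:
  fixes k :: int
  assumes "odd k" and "\<not> [k = 1] (mod 2 ^ Suc m)"
  obtains n where "2 ^ m - 1 \<le> k ^ n mod 2 ^ Suc m"
proof -
  obtain n where n: "[(k ^ n)\<^sup>2 = 1] (mod 2 ^ Suc m)" "\<not> [k ^ n = 1] (mod 2 ^ Suc m)"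
    using nontrivial_square_root_of_unity_among_powers
      odd_power_two_power_cong[OF assms(1)] assms(2) by metis
  have "odd (k ^ n)" using assms(1) by simp
  then show thesis using that nontrivial_square_root_of_unity_mod_two_power_ge n by blast
qed

lemma invariant_under_powers:
  fixes k q a :: int and f :: "int \<Rightarrow> 'b"
  assumes "coprime k q" and "coprime a q"
    and "\<forall>a. coprime a q \<longrightarrow> f ((k * a) mod q) = f (a mod q)"
  shows "f ((k ^ n * a) mod q) = f (a mod q)"
proof (induction n)
  case (Suc n)
  have "coprime (k ^ n * a) q" using assms(1,2) by simp
  then show ?case using assms(3) Suc.IH by (simp add: mult.assoc)
qed simp

lemma mono_on_or_antimono_on_eq_between:
  fixes g :: "'a::order \<Rightarrow> 'b::order"
  assumes "mono_on A g \<or> antimono_on A g"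
    and "a \<in> A" "b \<in> A" "x \<in> A" "a \<le> x" "x \<le> b" "g a = g b"
  shows "g x = g a"
  using assms(1)
proof
  assume "mono_on A g"
  then have "g a \<le> g x" "g x \<le> g b" using assms(2-6) by (auto dest: mono_onD)
  then show ?thesis using assms(7) by simp
next
  assume "antimono_on A g"
  then have "g x \<le> g a" "g b \<le> g x" using assms(2-6) by (auto dest: monotone_onD)
  then show ?thesis using assms(7) by simp
qed

lemma odd_Icc_even_upper:
  assumes "even b"
  shows "odd_Icc a b = odd_Icc a (b - 1)"
  using assms by (auto simp: odd_Icc_def le_less)

theorem lemma4p3:
  fixes r :: nat and k :: int and f :: "int \<Rightarrow> real"
  assumes r: "r \<ge> 1"
    and k_unit: "coprime k (2 ^ r)"
    and k_ne1: "\<not> [k = 1] (mod (2 ^ r))"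
    and f_mono: "mono_on (odd_Icc 1 (2 ^ r)) (\<lambda>i. f (i mod 2 ^ r))
               \<or> antimono_on (odd_Icc 1 (2 ^ r)) (\<lambda>i. f (i mod 2 ^ r))"
    and f_inv: "\<forall>a. coprime a (2 ^ r) \<longrightarrow> f ((k * a) mod 2 ^ r) = f (a mod 2 ^ r)"
  shows "\<forall>i\<in>odd_Icc 1 (2 ^ (r - 1)). \<forall>j\<in>odd_Icc 1 (2 ^ (r - 1)).
           f (i mod 2 ^ r) = f (j mod 2 ^ r)"
proof -
  obtain m where m: "r = Suc m" using r by (cases r) auto
  show ?thesis
  proof (cases m)
    case 0
    then show ?thesis using m by (auto simp: odd_Icc_def)
  next
    case (Suc m')
    have "odd k" using k_unit r by simp
    obtain n where n: "2 ^ m - 1 \<le> k ^ n mod 2 ^ r"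
      using odd_power_mod_two_power_ge[OF \<open>odd k\<close>] k_ne1 m by metis
    define y where "y = k ^ n mod 2 ^ r"
    have y_ge: "2 ^ m - 1 \<le> y" using n by (simp add: y_def)
    have "odd y" using \<open>odd k\<close> r even_mod_exp_div_exp_iff[of "k ^ n" r 0] by (simp add: y_def)
    moreover have "y < 2 ^ r" by (simp add: y_def)
    moreover have "(1::int) \<le> 2 ^ m - 1" using Suc one_le_power[of "2::int" m'] by (simp del: one_le_power)
    ultimately have y_mem: "y \<in> odd_Icc 1 (2 ^ r)" using y_ge by (simp add: odd_Icc_def)
    have f_y: "f (y mod 2 ^ r) = f (1 mod 2 ^ r)"
      using invariant_under_powers[OF k_unit _ f_inv, of 1] by (simp add: y_def)
    have "f (i mod 2 ^ r) = f (1 mod 2 ^ r)" if "i \<in> odd_Icc 1 (2 ^ m)" for i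
    proof -
      have "i \<in> odd_Icc 1 (2 ^ m - 1)" using that odd_Icc_even_upper[of "2 ^ m"] Suc by simp
      then have "i \<le> y" "i \<in> odd_Icc 1 (2 ^ r)" "1 \<le> i"
        using y_ge m by (auto simp: odd_Icc_def)
      then show ?thesis
        using mono_on_or_antimono_on_eq_between[OF f_mono _ y_mem, of 1 i] f_y r
        by (simp add: odd_Icc_def)
    qed
    then show ?thesis using m by simp
  qed
qed

end
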